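(* Let $G$ be a finite, connected, simple $3$-regular graph on more than $6$ vertices that is $4$-ordered. Then $G$ does not contain a square, i.e. $G$ has no cycle of length $4$.
   Context: A simple graph $G$ is called $k$-ordered if for every sequence $v_1,\ldots,v_k$ of $k$ distinct vertices of $G$ there exists a cycle in $G$ containing these $k$ vertices in the specified (cyclic) order. *)

theory Defs
  imports Main "HOL-Library.Sublist"
begin

definition simple_graph :: "'a set \<Rightarrow> ('a \<Rightarrow> 'a \<Rightarrow> bool) \<Rightarrow> bool" where
  "simple_graph V E \<longleftrightarrow>
     (\<forall>u v. E u v \<longrightarrow> u \<in> V \<and> v \<in> V) \<and>
     (\<forall>u v. E u v \<longrightarrow> E v u) \<and>
     (\<forall>v. \<not> E v v)"

definition connected_graph :: "'a set \<Rightarrow> ('a \<Rightarrow> 'a \<Rightarrow> bool) \<Rightarrow> bool" where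
  "connected_graph V E \<longleftrightarrow> (\<forall>u\<in>V. \<forall>v\<in>V. E\<^sup>*\<^sup>* u v)"

definition regular_graph :: "nat \<Rightarrow> 'a set \<Rightarrow> ('a \<Rightarrow> 'a \<Rightarrow> bool) \<Rightarrow> bool" where
  "regular_graph d V E \<longleftrightarrow> (\<forall>v\<in>V. card {u \<in> V. E v u} = d)"

definition is_cycle :: "'a set \<Rightarrow> ('a \<Rightarrow> 'a \<Rightarrow> bool) \<Rightarrow> 'a list \<Rightarrow> bool" where
  "is_cycle V E c \<longleftrightarrow>
     length c \<ge> 3 \<and> distinct c \<and> set c \<subseteq> V \<and>
     (\<forall>i < length c. E (c ! i) (c ! ((i + 1) mod length c)))"

text \<open>G is k-ordered: every sequence of k distinct vertices lies on some cycle in the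
specified cyclic order. Since every rotation (and reversal) of a cycle list is again a
cycle list, "in cyclic order" amounts to being a subsequence of some cycle list.\<close>
definition k_ordered :: "nat \<Rightarrow> 'a set \<Rightarrow> ('a \<Rightarrow> 'a \<Rightarrow> bool) \<Rightarrow> bool" where
  "k_ordered k V E \<longleftrightarrow>
     (\<forall>vs. length vs = k \<and> distinct vs \<and> set vs \<subseteq> V \<longrightarrow>
        (\<exists>c. is_cycle V E c \<and> subseq vs c))"

end

theory Submission
  imports Defs
begin

text \<open>
  Let abcd be a square. If it has a chord ac, put S = {a, b, c, d}. Otherwise 4-orderedness
  forces the third neighbours of a and c to coincide in some x, and those of b and d in some y;
  put S = {a, b, c, d, x, y}. Either way every vertex of S has two neighbours in S, hence at most
  one outside, and only two vertices of S have a neighbour outside at all. Connectivity yields a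
  vertex t outside S adjacent to S, and t has a neighbour t' outside S too. A cycle through a, t,
  c, t' in this order leaves S, re-enters it and leaves it again, and these three crossings use
  three distinct vertices of S: a contradiction.
\<close>

lemma simple_graphD:
  assumes "simple_graph V E" and "E u v"
  shows "u \<in> V" and "v \<in> V" and "E v u" and "u \<noteq> v"
  using assms unfolding simple_graph_def by blast+

lemma rtranclp_exits_set:
  assumes "R\<^sup>*\<^sup>* u v" and "u \<in> S" and "v \<notin> S"
  shows "\<exists>x y. x \<in> S \<and> y \<notin> S \<and> R x y"
  using assms by (induction rule: rtranclp_induct) blast+

lemma nat_exit_step:
  fixes P :: "nat \<Rightarrow> bool"
  assumes "i < j" and "P i" and "\<not> P j"
  shows "\<exists>k. i \<le> k \<and> k < j \<and> P k \<and> \<not> P (Suc k)"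
  using assms
proof (induction j)
  case (Suc j)
  show ?case
  proof (cases "P j")
    case True
    then show ?thesis using Suc.prems by (intro exI[of _ j]) (simp add: less_Suc_eq_le)
  next
    case False
    then show ?thesis using Suc by (auto simp: less_Suc_eq)
  qed
qed simp

lemma subseq_nth_strict_mono:
  assumes "subseq xs ys"
  shows "\<exists>f. strict_mono_on {..<length xs} f \<and>
             (\<forall>i<length xs. f i < length ys \<and> ys ! f i = xs ! i)"
  using assms
proof (induction rule: list_emb.induct)
  case (list_emb_Nil ys)
  then show ?case by (simp add: strict_mono_on_def)
next
  case (list_emb_Cons xs ys y)
  then obtain f where "strict_mono_on {..<length xs} f"
    "\<forall>i<length xs. f i < length ys \<and> ys ! f i = xs ! i" by blast
  then show ?case
    by (intro exI[of _ "Suc \<circ> f"]) (auto simp: strict_mono_on_def)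
next
  case (list_emb_Cons2 x y xs ys)
  then obtain f where f: "strict_mono_on {..<length xs} f"
    "\<forall>i<length xs. f i < length ys \<and> ys ! f i = xs ! i" by blast
  let ?g = "case_nat 0 (Suc \<circ> f)"
  have "strict_mono_on {..<length (x # xs)} ?g"
    using f(1) by (auto simp: strict_mono_on_def split: nat.splits)
  moreover have "\<forall>i<length (x # xs). ?g i < length (y # ys) \<and> (y # ys) ! ?g i = (x # xs) ! i"
    using f(2) list_emb_Cons2.hyps by (auto split: nat.splits)
  ultimately show ?case by blast
qed

lemma subseq_four_indices:
  assumes "subseq [w, x, y, z] ys"
  obtains i j k l where "i < j" "j < k" "k < l" "l < length ys"
    "ys ! i = w" "ys ! j = x" "ys ! k = y" "ys ! l = z"
proof -
  obtain f where mono: "strict_mono_on {..<length [w, x, y, z]} f"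
    and f: "\<forall>i<length [w, x, y, z]. f i < length ys \<and> ys ! f i = [w, x, y, z] ! i"
    using subseq_nth_strict_mono[OF assms] by blast
  have "f 0 < f 1" "f 1 < f 2" "f 2 < f 3"
    using mono by (simp_all add: strict_mono_on_def)
  moreover have "f 3 < length ys" "ys ! f 0 = w" "ys ! f 1 = x" "ys ! f 2 = y" "ys ! f 3 = z"
    using f by (auto simp: numeral_eq_Suc)
  ultimately show thesis by (rule that)
qed

lemma is_cycle_edge:
  assumes "is_cycle V E cy" and "Suc i < length cy"
  shows "E (cy ! i) (cy ! Suc i)"
  using assms unfolding is_cycle_def by (metis Suc_lessD add.commute mod_less plus_1_eq_Suc)

lemma is_cycle_nth_eq_iff:
  assumes "is_cycle V E cy" and "i < length cy" and "j < length cy"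
  shows "cy ! i = cy ! j \<longleftrightarrow> i = j"
  using assms unfolding is_cycle_def by (simp add: nth_eq_iff_index_eq)

definition inner_boundary :: "('a \<Rightarrow> 'a \<Rightarrow> bool) \<Rightarrow> 'a set \<Rightarrow> 'a set" where
  "inner_boundary E S = {u \<in> S. \<exists>w. w \<notin> S \<and> E u w}"

lemma alternating_cycle_three_boundary_vertices:
  assumes G: "simple_graph V E" and cy: "is_cycle V E cy" and sub: "subseq [s, t, s', t'] cy"
    and "s \<in> S" "s' \<in> S" "t \<notin> S" "t' \<notin> S"
    and one_outside:
      "\<And>u w w'. u \<in> S \<Longrightarrow> w \<notin> S \<Longrightarrow> w' \<notin> S \<Longrightarrow> E u w \<Longrightarrow> E u w' \<Longrightarrow> w = w'"
  shows "\<not> inner_boundary E S \<subseteq> {p, q}"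
proof -
  obtain i j k l where idx: "i < j" "j < k" "k < l" "l < length cy"
    "cy ! i = s" "cy ! j = t" "cy ! k = s'" "cy ! l = t'"
    using subseq_four_indices[OF sub] by blast
  let ?in = "\<lambda>n. cy ! n \<in> S"
  obtain m where m: "i \<le> m" "m < j" "?in m" "\<not> ?in (Suc m)"
    using nat_exit_step[of i j ?in] idx assms(4-7) by auto
  obtain n where n: "j \<le> n" "n < k" "\<not> ?in n" "?in (Suc n)"
    using nat_exit_step[of j k "\<lambda>n. \<not> ?in n"] idx assms(4-7) by auto
  obtain m' where m': "k \<le> m'" "m' < l" "?in m'" "\<not> ?in (Suc m')"
    using nat_exit_step[of k l ?in] idx assms(4-7) by auto
  have edge: "E (cy ! a) (cy ! Suc a)" if "Suc a < length cy" for a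
    using is_cycle_edge[OF cy that] .
  have eq_iff: "cy ! a = cy ! b \<longleftrightarrow> a = b" if "a < length cy" "b < length cy" for a b
    using is_cycle_nth_eq_iff[OF cy that] .
  have exit: "E (cy ! m) (cy ! Suc m)" "E (cy ! m') (cy ! Suc m')"
    and entry: "E (cy ! Suc n) (cy ! n)"
    using edge[of m] edge[of m'] edge[of n] simple_graphD(3)[OF G] m m' n idx by auto
  have "cy ! m \<in> inner_boundary E S" "cy ! Suc n \<in> inner_boundary E S"
    "cy ! m' \<in> inner_boundary E S"
    using exit entry m n m' unfolding inner_boundary_def by blast+
  moreover have "cy ! m \<noteq> cy ! Suc n" "cy ! m \<noteq> cy ! m'"
    using eq_iff m n m' idx by auto
  moreover have "cy ! Suc n \<noteq> cy ! m'"
  proof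
    assume same: "cy ! Suc n = cy ! m'"
    \<comment> \<open>that vertex would have the two distinct outside neighbours \<open>cy ! n\<close> and \<open>cy ! Suc m'\<close>\<close>
    have "cy ! n = cy ! Suc m'"
      using one_outside[OF m'(3) n(3) m'(4)] entry exit(2) same by simp
    then show False using eq_iff n m' idx by auto
  qed
  ultimately show ?thesis by blast
qed

lemma cycle_middle_neighbours:
  assumes cy: "is_cycle V E cy" and sub: "subseq [w, u, v, x] cy"
  obtains p q r where "E p u" "E u q" "E v r" "distinct [p, q, r]" "x \<notin> {p, q}" "r \<noteq> w"
proof -
  obtain i j k l where idx: "i < j" "j < k" "k < l" "l < length cy"
    "cy ! i = w" "cy ! j = u" "cy ! k = v" "cy ! l = x"
    using subseq_four_indices[OF sub] by blast
  have eq_iff: "cy ! a = cy ! b \<longleftrightarrow> a = b" if "a < length cy" "b < length cy" for a b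
    using is_cycle_nth_eq_iff[OF cy that] .
  have "E (cy ! (j - 1)) u" "E u (cy ! Suc j)" "E v (cy ! Suc k)"
    using is_cycle_edge[OF cy, of "j - 1"] is_cycle_edge[OF cy, of j] is_cycle_edge[OF cy, of k] idx
    by auto
  moreover have "distinct [cy ! (j - 1), cy ! Suc j, cy ! Suc k]"
    "x \<notin> {cy ! (j - 1), cy ! Suc j}" "cy ! Suc k \<noteq> w"
    using eq_iff idx by auto
  ultimately show thesis by (rule that)
qed

lemma regular_graph_neighbours_exhaust:
  assumes "finite V" "simple_graph V E" "regular_graph d V E"
    and "distinct xs" "length xs = d" "\<forall>x\<in>set xs. E u x" "E u w"
  shows "w \<in> set xs"
proof -
  have u: "u \<in> V" using simple_graphD(1)[OF assms(2,7)] .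
  have sub: "set xs \<subseteq> {v \<in> V. E u v}" using assms(6) simple_graphD(2)[OF assms(2)] by blast
  have "card (set xs) = card {v \<in> V. E u v}"
    using assms(3-5) u by (simp add: distinct_card regular_graph_def)
  then have "set xs = {v \<in> V. E u v}" using card_subset_eq[OF _ sub] assms(1) by simp
  then show ?thesis using assms(7) simple_graphD(2)[OF assms(2)] by blast
qed

lemma regular_graph_neighbour_avoiding:
  assumes "finite V" "regular_graph d V E" "u \<in> V" "finite A" "card A < d"
  obtains w where "E u w" "w \<notin> A"
proof (rule ccontr)
  assume "\<not> thesis"
  then have "{v \<in> V. E u v} \<subseteq> A" using that by blast
  then have "card {v \<in> V. E u v} \<le> card A" by (rule card_mono[OF assms(4)])
  then show False using assms(2,3,5) unfolding regular_graph_def by simp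
qed

definition square :: "('a \<Rightarrow> 'a \<Rightarrow> bool) \<Rightarrow> 'a \<Rightarrow> 'a \<Rightarrow> 'a \<Rightarrow> 'a \<Rightarrow> bool" where
  "square E a b c d \<longleftrightarrow> distinct [a, b, c, d] \<and> E a b \<and> E b c \<and> E c d \<and> E d a"

lemma square_rotate: "square E a b c d \<Longrightarrow> square E b c d a"
  unfolding square_def by auto

lemma is_cycle_length_four:
  assumes "is_cycle V E cy" and "length cy = 4"
  obtains a b c d where "square E a b c d"
proof -
  obtain a b c d where "cy = [a, b, c, d]"
    using assms(2) by (auto simp: numeral_eq_Suc length_Suc_conv)
  with assms(1) have cy: "is_cycle V E [a, b, c, d]" by simp
  have "E a b" "E b c" "E c d"
    using is_cycle_edge[OF cy, of 0] is_cycle_edge[OF cy, of 1] is_cycle_edge[OF cy, of 2]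
    by (simp_all add: numeral_eq_Suc)
  moreover have "E d a"
  proof -
    have "E ([a, b, c, d] ! 3) ([a, b, c, d] ! ((3 + 1) mod length [a, b, c, d]))"
      using cy unfolding is_cycle_def by (metis length_Cons list.size(3) numeral_3_eq_3 lessI)
    then show ?thesis by simp
  qed
  moreover have "distinct [a, b, c, d]" using cy by (simp add: is_cycle_def)
  ultimately have "square E a b c d" by (simp add: square_def)
  then show thesis by (rule that)
qed

locale cubic_graph =
  fixes V :: "'a set" and E :: "'a \<Rightarrow> 'a \<Rightarrow> bool"
  assumes finite_vertices: "finite V"
    and simple: "simple_graph V E"
    and cubic: "regular_graph 3 V E"
begin

lemma sym: "E u v \<Longrightarrow> E v u"
  using simple_graphD(3)[OF simple] .

lemma neighbours_exhaust:
  assumes "E u x" "E u y" "E u z" "distinct [x, y, z]" "E u w"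
  shows "w \<in> {x, y, z}"
  using regular_graph_neighbours_exhaust[OF finite_vertices simple cubic, of "[x, y, z]"] assms by simp

lemma third_neighbour:
  assumes "u \<in> V"
  obtains w where "E u w" "w \<noteq> x" "w \<noteq> y"
proof -
  have "card {x, y} < 3" by (cases "x = y") auto
  then show thesis
    using regular_graph_neighbour_avoiding[OF finite_vertices cubic assms, of "{x, y}"] that
    by blast
qed

lemma at_most_one_outside_neighbour:
  assumes "E u x" "E u y" "x \<noteq> y" "x \<in> S" "y \<in> S"
    and "E u w" "E u w'" "w \<notin> S" "w' \<notin> S"
  shows "w = w'"
  using neighbours_exhaust[OF assms(1,2,6) _ assms(7)] assms(3-5,8,9) by auto

lemma square_vertices: "square E a b c d \<Longrightarrow> {a, b, c, d} \<subseteq> V"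
  unfolding square_def using simple_graphD(1)[OF simple] by blast

lemma square_neighbours_inside:
  assumes "square E a b c d" "{a, b, c, d} \<subseteq> S" "u \<in> {a, b, c, d}"
  shows "\<exists>x y. x \<noteq> y \<and> x \<in> S \<and> y \<in> S \<and> E u x \<and> E u y"
  using assms sym unfolding square_def by auto

end

locale four_ordered_cubic_graph = cubic_graph +
  assumes connected: "connected_graph V E"
    and four_ordered: "k_ordered 4 V E"
begin

lemma four_ordered_cycle:
  assumes "distinct [w, x, y, z]" "{w, x, y, z} \<subseteq> V"
  obtains cy where "is_cycle V E cy" "subseq [w, x, y, z] cy"
proof -
  have "length [w, x, y, z] = 4" "set [w, x, y, z] \<subseteq> V" using assms(2) by simp_all
  then show thesis
    using four_ordered assms(1) that unfolding k_ordered_def by blast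
qed

lemma three_boundary_vertices:
  assumes "S \<subseteq> V" "card S < card V" "s \<in> S" "s' \<in> S" "s \<noteq> s'"
    and two_inside: "\<And>u. u \<in> S \<Longrightarrow> \<exists>x y. x \<noteq> y \<and> x \<in> S \<and> y \<in> S \<and> E u x \<and> E u y"
  shows "\<not> inner_boundary E S \<subseteq> {p, q}"
proof
  assume boundary: "inner_boundary E S \<subseteq> {p, q}"
  have "\<not> V \<subseteq> S"
    using assms(2) card_mono[OF finite_subset[OF assms(1) finite_vertices], of V] by linarith
  then obtain v where "v \<in> V" "v \<notin> S" by blast
  then have "E\<^sup>*\<^sup>* s v" using connected assms(1,3) unfolding connected_graph_def by auto
  then obtain u t where "u \<in> S" "t \<notin> S" "E u t"
    using rtranclp_exits_set[OF _ assms(3) \<open>v \<notin> S\<close>] by blast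
  then have t: "t \<in> V" "t \<notin> S" using simple_graphD(2)[OF simple] by auto
  obtain t' where t': "E t t'" "t' \<noteq> p" "t' \<noteq> q" using third_neighbour[OF t(1)] .
  have "t' \<notin> S"
  proof
    assume "t' \<in> S"
    then have "t' \<in> inner_boundary E S" using sym[OF t'(1)] t(2) unfolding inner_boundary_def by blast
    then show False using boundary t' by blast
  qed
  moreover have "t' \<in> V" "t \<noteq> t'" using simple_graphD(2,4)[OF simple t'(1)] by auto
  ultimately have "distinct [s, t, s', t']" "{s, t, s', t'} \<subseteq> V"
    using assms(1,3-5) t by auto
  then obtain cy where cy: "is_cycle V E cy" "subseq [s, t, s', t'] cy"
    by (rule four_ordered_cycle)
  have one_outside:
    "\<And>u w w'. u \<in> S \<Longrightarrow> w \<notin> S \<Longrightarrow> w' \<notin> S \<Longrightarrow> E u w \<Longrightarrow> E u w' \<Longrightarrow> w = w'"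
  proof -
    fix u w w'
    assume "u \<in> S" and outside: "w \<notin> S" "w' \<notin> S" "E u w" "E u w'"
    obtain x y where "E u x" "E u y" "x \<noteq> y" "x \<in> S" "y \<in> S"
      using two_inside[OF \<open>u \<in> S\<close>] by blast
    then show "w = w'" using at_most_one_outside_neighbour outside by blast
  qed
  have "\<not> inner_boundary E S \<subseteq> {p, q}"
    using simple cy assms(3,4) t(2) \<open>t' \<notin> S\<close> one_outside
    by (rule alternating_cycle_three_boundary_vertices)
  then show False using boundary by blast
qed

lemma square_no_chord:
  assumes sq: "square E a b c d" and "4 < card V"
  shows "\<not> E a c"
proof
  assume ac: "E a c"
  let ?S = "{a, b, c, d}"
  have "w \<in> ?S" if "u \<in> {a, c}" "E u w" for u w
    using that neighbours_exhaust[of a b d c w] neighbours_exhaust[of c b d a w] sq ac sym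
    unfolding square_def by auto
  then have "inner_boundary E ?S \<subseteq> {b, d}" unfolding inner_boundary_def by blast
  moreover have "\<not> inner_boundary E ?S \<subseteq> {b, d}"
  proof (rule three_boundary_vertices)
    show "?S \<subseteq> V" using square_vertices[OF sq] .
    show "card ?S < card V" using card_length[of "[a, b, c, d]"] assms(2) by simp
    show "a \<in> ?S" "c \<in> ?S" "a \<noteq> c" using sq unfolding square_def by auto
    show "\<exists>x y. x \<noteq> y \<and> x \<in> ?S \<and> y \<in> ?S \<and> E u x \<and> E u y" if "u \<in> ?S" for u
      using square_neighbours_inside[OF sq _ that] by blast
  qed
  ultimately show False by blast
qed

lemma square_opposite_common_neighbour:
  assumes sq: "square E a b c d" and ac: "\<not> E a c"
  obtains x where "E a x" "E c x" "x \<notin> {b, d}"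
proof -
  have V: "{a, b, c, d} \<subseteq> V" using square_vertices[OF sq] .
  obtain a' where a': "E a a'" "a' \<noteq> b" "a' \<noteq> d" using third_neighbour V by blast
  obtain c' where c': "E c c'" "c' \<noteq> b" "c' \<noteq> d" using third_neighbour V by blast
  have "E a b" "E a d" "E c b" "E c d" "b \<noteq> d" using sq sym unfolding square_def by auto
  then have Na: "E a w \<Longrightarrow> w \<in> {b, d, a'}" and Nc: "E c w \<Longrightarrow> w \<in> {b, d, c'}" for w
    using neighbours_exhaust a' c' by auto
  have "a' = c'"
  proof (rule ccontr)
    assume "a' \<noteq> c'"
    moreover have "a \<noteq> c" using sq unfolding square_def by auto
    ultimately have "distinct [c', a, c, a']"
      using a' c' ac sym simple_graphD(4)[OF simple] by auto
    moreover have "{c', a, c, a'} \<subseteq> V" using V a' c' simple_graphD(2)[OF simple] by auto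
    ultimately obtain cy where "is_cycle V E cy" "subseq [c', a, c, a'] cy"
      by (rule four_ordered_cycle)
    \<comment> \<open>the cycle enters and leaves \<open>a\<close> through \<open>b\<close> and \<open>d\<close>, so it can only leave \<open>c\<close>
      through \<open>c'\<close>, which comes before \<open>a\<close>\<close>
    then obtain p q r where "E p a" "E a q" "E c r" "distinct [p, q, r]" "a' \<notin> {p, q}" "r \<noteq> c'"
      by (rule cycle_middle_neighbours)
    then show False using Na[of p] Na[of q] Nc[of r] sym by auto
  qed
  then show thesis using that a' c' by auto
qed

lemma square_has_chord:
  assumes sq: "square E a b c d" and "6 < card V"
  shows "E a c \<or> E b d"
proof (rule ccontr)
  assume "\<not> (E a c \<or> E b d)"
  then obtain x y where x: "E a x" "E c x" "x \<notin> {b, d}" and y: "E b y" "E d y" "y \<notin> {c, a}"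
    using square_opposite_common_neighbour[OF sq]
      square_opposite_common_neighbour[OF square_rotate[OF sq]]
    by metis
  let ?S = "{a, b, c, d, x, y}"
  have "E a b" "E a d" "E b a" "E b c" "E c b" "E c d" "E d a" "E d c" "distinct [a, b, c, d]"
    using sq sym unfolding square_def by auto
  then have "w \<in> ?S" if "u \<in> {a, b, c, d}" "E u w" for u w
    using that x y neighbours_exhaust[of a b d x w] neighbours_exhaust[of b a c y w] neighbours_exhaust[of c b d x w]
      neighbours_exhaust[of d a c y w]
    by auto
  then have "inner_boundary E ?S \<subseteq> {x, y}" unfolding inner_boundary_def by blast
  moreover have "\<not> inner_boundary E ?S \<subseteq> {x, y}"
  proof (rule three_boundary_vertices)
    show "?S \<subseteq> V" using square_vertices[OF sq] x y simple_graphD(2)[OF simple] by auto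
    show "card ?S < card V" using card_length[of "[a, b, c, d, x, y]"] assms(2) by simp
    show "a \<in> ?S" "c \<in> ?S" "a \<noteq> c" using sq unfolding square_def by auto
    show "\<exists>u v. u \<noteq> v \<and> u \<in> ?S \<and> v \<in> ?S \<and> E w u \<and> E w v" if w: "w \<in> ?S" for w
    proof -
      consider "w \<in> {a, b, c, d}" | "w = x" | "w = y" using w by blast
      then show ?thesis
      proof cases
        case 1
        then show ?thesis using square_neighbours_inside[OF sq _ 1] by blast
      next
        case 2
        then show ?thesis using x sym \<open>distinct [a, b, c, d]\<close> by auto
      next
        case 3
        then show ?thesis using y sym \<open>distinct [a, b, c, d]\<close> by auto
      qed
    qed
  qed
  ultimately show False by blast
qed

end

theorem theorem2p1:
  fixes V :: "'a set" and E :: "'a \<Rightarrow> 'a \<Rightarrow> bool"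
  assumes "finite V" and "simple_graph V E" and "connected_graph V E"
    and "regular_graph 3 V E" and "card V > 6" and "k_ordered 4 V E"
  shows "\<not> (\<exists>c. is_cycle V E c \<and> length c = 4)"
proof
  assume "\<exists>c. is_cycle V E c \<and> length c = 4"
  then obtain a b c d where sq: "square E a b c d" by (metis is_cycle_length_four)
  interpret four_ordered_cubic_graph V E
    using assms by unfold_locales
  have "E a c \<or> E b d" using square_has_chord[OF sq] assms(5) .
  then show False
    using square_no_chord[OF sq] square_no_chord[OF square_rotate[OF sq]] assms(5) by auto
qed

end
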